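(* Under the hypotheses (i)–(iv) below, for $0<\delta<1$ let $$(x^*(\delta),z^*(\delta))=\operatorname*{argmax}_{x}\operatorname*{argmin}_{\|z\|_\infty\le\ell_F}\Big\{V(\theta;z)+\delta\nabla_\theta V(\theta;z)^\top x-F^*(z)-\tfrac{\delta}{2}\|x\|^2\Big\}.$$ Then $\|x^*(\delta)-\nabla_\theta R(\pi_\theta)\|^2=\mathcal O(\delta^2)$ as $\delta\to0_+$. Hypotheses: (i) $F:\mathbb{R}^{SA}\to\mathbb{R}$ is concave and differentiable everywhere with $\max\{\|\nabla F(\lambda)\|_\infty:\|\lambda\|_1\le\frac{2}{1-\gamma}\}\le\ell_F$; (ii) $\|\nabla F(\lambda)-\nabla F(\lambda')\|_\infty\le L_F\|\lambda-\lambda'\|_1$ for all $\lambda,\lambda'$; (iii) $F^*$ is $\ell_{F^*}$-Lipschitz w.r.t. $\|\cdot\|_\infty$ on $\{z:\|z\|_\infty\le2\ell_F,F^*(z)>-\infty\}$; (iv) $\pi_\theta$ is differentiable in $\theta$ with $\|\nabla_\theta\pi_\theta(\cdot|s)\|_{\infty,2}\le C$ for all $s$.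
   Context: Finite MDP with states $\mathcal S$ ($S=|\mathcal S|$), actions $\mathcal A$ ($A=|\mathcal A|$), initial distribution $\xi$, discount $\gamma\in(0,1)$. Policies $\pi_\theta$, $\theta\in\Theta\subset\mathbb{R}^d$; occupancy measure $\lambda(\theta)_{sa}=\sum_{t\ge0}\gamma^t\mathbb P(s_t=s,a_t=a\mid\pi_\theta,s_0\sim\xi)$; $R(\pi_\theta)=F(\lambda(\theta))$; $V(\theta;z)=\langle z,\lambda(\theta)\rangle$ for $z\in\mathbb{R}^{SA}$; Fenchel dual $F^*(z)=\inf_\lambda\{\langle\lambda,z\rangle-F(\lambda)\}$. $\nabla_\theta\pi_\theta(\cdot|s)=[\nabla_\theta\pi_\theta(1|s),\dots,\nabla_\theta\pi_\theta(A|s)]\in\mathbb{R}^{d\times A}$ and $\|B\|_{\infty,2}:=\max_{\|u\|_\infty\le1}\|Bu\|_2$. *)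

theory Defs
  imports "HOL-Analysis.Analysis" "HOL-Library.Landau_Symbols"
begin

definition grad :: "('v::real_inner \<Rightarrow> real) \<Rightarrow> 'v \<Rightarrow> 'v" where
  "grad f x = (THE D. GDERIV f x :> D)"

definition norm1 :: "real ^ 'n \<Rightarrow> real" where
  "norm1 v = (\<Sum>i\<in>UNIV. \<bar>v $ i\<bar>)"

text \<open>State distribution at time t of the Markov chain induced by a stationary policy
  pol (pol s a = probability of action a in state s), transition kernel P
  (P s a s' = probability of moving to s' from s under a) and initial distribution xi:
  state_dist xi P pol t s = Prob(s_t = s).\<close>
fun state_dist :: "('s::finite \<Rightarrow> real) \<Rightarrow> ('s \<Rightarrow> 'a::finite \<Rightarrow> 's \<Rightarrow> real)
    \<Rightarrow> ('s \<Rightarrow> 'a \<Rightarrow> real) \<Rightarrow> nat \<Rightarrow> 's \<Rightarrow> real" where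
  "state_dist xi P pol 0 s = xi s"
| "state_dist xi P pol (Suc t) s' =
     (\<Sum>s\<in>UNIV. \<Sum>a\<in>UNIV. state_dist xi P pol t s * pol s a * P s a s')"

definition occ :: "('s::finite \<Rightarrow> real) \<Rightarrow> ('s \<Rightarrow> 'a::finite \<Rightarrow> 's \<Rightarrow> real) \<Rightarrow> real
    \<Rightarrow> ('s \<Rightarrow> 'a \<Rightarrow> real) \<Rightarrow> real ^ ('s \<times> 'a)" where
  "occ xi P \<gamma> pol = (\<chi> p. (\<Sum>t. \<gamma> ^ t * state_dist xi P pol t (fst p) * pol (fst p) (snd p)))"

definition fenchel_dual :: "(real ^ 'n \<Rightarrow> real) \<Rightarrow> real ^ 'n \<Rightarrow> ereal" where
  "fenchel_dual F z = (INF l. ereal (inner l z - F l))"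

end

theory Submission
  imports Defs
begin

(*
  With J the Jacobian of theta |-> lambda(theta) and l0 = lambda(theta), the chain rule gives
  grad_theta V(theta; z) = J^T z and grad_theta R = J^T grad F(l0), so the saddle objective
  depends on theta only through l0 and J.  Put g0 = J^T grad F(l0) and nu = l0 + delta J g0.
  The max-min value at g0 is at least F(nu) - delta/2 |g0|^2 (Fenchel inequality), while the
  value at x*(delta) is at most the objective at z = grad F(nu), where concavity makes the
  Fenchel inequality an equality.  Comparing the two gives
  |x* - g0|^2 <= 2 <J^T grad F(nu) - g0, x* - g0>, hence
  |x* - g0| <= 2 |J^T (grad F(nu) - grad F(l0))| = O(delta) by (ii).  Since |l0|_1 = 1/(1-gamma),
  for small delta nu stays in the l1-ball of radius 2/(1-gamma), so grad F(nu) is admissible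
  by (i).  Differentiability of lambda comes from differentiating the discounted series term by
  term: the t-th term has gradient O(t gamma^t) by (iv).
*)

lemma grad_eqI:
  fixes f :: "'v::real_inner \<Rightarrow> real"
  assumes "GDERIV f x :> D"
  shows "grad f x = D"
  unfolding grad_def
proof (rule the_equality)
  fix D' assume "GDERIV f x :> D'"
  then have "(\<lambda>h. inner h D') = (\<lambda>h. inner h D)"
    using assms unfolding gderiv_def by (metis has_derivative_unique)
  then have "inner (D' - D) D' = inner (D' - D) D" by meson
  then have "inner (D' - D) (D' - D) = 0" by (simp add: inner_diff_right)
  then show "D' = D" by simp
qed (rule assms)

lemma GDERIV_grad:
  fixes f :: "'v::euclidean_space \<Rightarrow> real"
  assumes "f differentiable (at x)"
  shows "GDERIV f x :> grad f x"
proof -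
  obtain f' where f': "(f has_derivative f') (at x)"
    using assms unfolding differentiable_def by blast
  then have "linear f'" by (rule has_derivative_linear)
  then have "f' = (\<lambda>h. inner h (adjoint f' 1))"
    by (simp add: adjoint_works inner_real_def)
  with f' have "GDERIV f x :> adjoint f' 1" unfolding gderiv_def by simp
  then show ?thesis by (metis grad_eqI)
qed

lemma grad_compose_has_derivative:
  fixes g :: "'a::euclidean_space \<Rightarrow> 'b::euclidean_space"
  assumes g: "(g has_derivative J) (at x)" and f: "GDERIV f (g x) :> D"
  shows "grad (\<lambda>y. f (g y)) x = adjoint J D"
proof (rule grad_eqI)
  have "linear J" using g by (rule has_derivative_linear)
  moreover have "((\<lambda>y. f (g y)) has_derivative (\<lambda>h. inner (J h) D)) (at x)"
    using has_derivative_compose[OF g f[unfolded gderiv_def]] by simp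
  ultimately show "GDERIV (\<lambda>y. f (g y)) x :> adjoint J D"
    unfolding gderiv_def by (simp add: adjoint_works)
qed

lemma concave_on_le_tangent:
  fixes F :: "'v::real_inner \<Rightarrow> real"
  assumes conc: "concave_on UNIV F" and d: "GDERIV F x :> D"
  shows "F y \<le> F x + inner (y - x) D"
proof -
  define v where "v = y - x"
  define \<phi> where "\<phi> t = - F (x + t *\<^sub>R v)" for t :: real
  have "convex_on UNIV \<phi>"
  proof (rule convex_onI)
    fix t a b :: real assume t: "0 < t" "t < 1"
    have "x + ((1 - t) *\<^sub>R a + t *\<^sub>R b) *\<^sub>R v = (1 - t) *\<^sub>R (x + a *\<^sub>R v) + t *\<^sub>R (x + b *\<^sub>R v)"
      by (simp add: algebra_simps)
    moreover have "(1 - t) * F (x + a *\<^sub>R v) + t * F (x + b *\<^sub>R v)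
        \<le> F ((1 - t) *\<^sub>R (x + a *\<^sub>R v) + t *\<^sub>R (x + b *\<^sub>R v))"
      using concave_onD[OF conc, of t] t by auto
    ultimately show "\<phi> ((1 - t) *\<^sub>R a + t *\<^sub>R b) \<le> (1 - t) * \<phi> a + t * \<phi> b"
      unfolding \<phi>_def by simp
  qed auto
  moreover have "(\<phi> has_field_derivative (- inner v D)) (at 0)"
  proof -
    have "((\<lambda>t. x + t *\<^sub>R v) has_derivative (\<lambda>t. t *\<^sub>R v)) (at 0)"
      by (auto intro!: derivative_eq_intros)
    moreover have "(F has_derivative (\<lambda>h. inner h D)) (at (x + 0 *\<^sub>R v))"
      using d unfolding gderiv_def by simp
    ultimately have "((\<lambda>t. F (x + t *\<^sub>R v)) has_derivative (\<lambda>t. inner (t *\<^sub>R v) D)) (at 0)"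
      by (rule has_derivative_compose)
    then have "((\<lambda>t. F (x + t *\<^sub>R v)) has_derivative (\<lambda>t. t * inner v D)) (at 0)"
      by (simp add: mult.commute)
    then show ?thesis
      unfolding \<phi>_def has_field_derivative_def
      by (auto intro!: derivative_eq_intros simp: mult.commute)
  qed
  ultimately have "\<phi> 1 - \<phi> 0 \<ge> - inner v D"
    using convex_on_imp_above_tangent[of UNIV \<phi> 0 1] by simp
  then show ?thesis unfolding \<phi>_def v_def by simp
qed

lemma fenchel_dual_le: "fenchel_dual F z \<le> ereal (inner l z - F l)"
  unfolding fenchel_dual_def by (rule INF_lower) simp

lemma fenchel_dual_grad:
  fixes F :: "real ^ 'n \<Rightarrow> real"
  assumes "concave_on UNIV F" "GDERIV F l :> D"
  shows "fenchel_dual F D = ereal (inner l D - F l)"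
proof (rule antisym)
  show "ereal (inner l D - F l) \<le> fenchel_dual F D"
    unfolding fenchel_dual_def
  proof (rule INF_greatest)
    fix l'
    have "F l' \<le> F l + inner (l' - l) D" using assms by (rule concave_on_le_tangent)
    then show "ereal (inner l D - F l) \<le> ereal (inner l' D - F l')"
      by (simp add: inner_diff_left)
  qed
qed (rule fenchel_dual_le)

lemma norm1_nonneg: "0 \<le> norm1 v"
  unfolding norm1_def by (simp add: sum_nonneg)

lemma norm1_triangle: "norm1 (v + w) \<le> norm1 v + norm1 w"
  unfolding norm1_def by (simp add: sum.distrib[symmetric] sum_mono abs_triangle_ineq)

lemma norm1_scaleR: "norm1 (c *\<^sub>R v) = \<bar>c\<bar> * norm1 v"
  unfolding norm1_def by (simp add: sum_distrib_left abs_mult)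

lemma summable_of_nat_mult_power:
  fixes g :: real
  assumes "0 \<le> g" "g < 1"
  shows "summable (\<lambda>n. real n * g ^ n)"
proof -
  have "summable (\<lambda>n. diffs (\<lambda>n. 1) n * g ^ n)"
    using assms by (intro termdiff_converges[where K = 1]) auto
  then have "summable (\<lambda>n. real (Suc n) * g ^ n)" by (simp add: diffs_def)
  then show ?thesis
    by (rule summable_comparison_test'[where N = 0]) (use assms in \<open>simp add: mult_right_mono\<close>)
qed

lemma has_derivative_suminf:
  fixes f :: "nat \<Rightarrow> 'a::euclidean_space \<Rightarrow> real"
  assumes S: "convex S" "open S" "x0 \<in> S"
    and f': "\<And>n x. x \<in> S \<Longrightarrow> (f n has_derivative (\<lambda>h. inner h (v n x))) (at x)"
    and v: "\<And>n x. x \<in> S \<Longrightarrow> norm (v n x) \<le> M n" and M: "summable M"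
    and f0: "summable (\<lambda>n. f n x0)"
  shows "((\<lambda>x. \<Sum>n. f n x) has_derivative (\<lambda>h. inner h (\<Sum>n. v n x0))) (at x0)"
proof -
  have tail: "norm ((\<Sum>i<n. inner h (v i x)) - inner h (\<Sum>i. v i x)) \<le> (\<Sum>i. M (i + n)) * norm h"
    if x: "x \<in> S" for n x h
  proof -
    have sv: "summable (\<lambda>i. v i x)"
      using v[OF x] by (intro summable_comparison_test'[OF M]) auto
    have "(\<Sum>i<n. inner h (v i x)) - inner h (\<Sum>i. v i x) = - inner h (\<Sum>i. v (i + n) x)"
      using suminf_minus_initial_segment[OF sv, of n] by (simp add: inner_sum_right inner_diff_right)
    then have "norm ((\<Sum>i<n. inner h (v i x)) - inner h (\<Sum>i. v i x)) \<le> norm h * norm (\<Sum>i. v (i + n) x)"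
      using Cauchy_Schwarz_ineq2 by simp
    also have "\<dots> \<le> norm h * (\<Sum>i. M (i + n))"
      using v[OF x] summable_ignore_initial_segment[OF M]
      by (intro mult_left_mono norm_suminf_le) auto
    finally show ?thesis by (simp add: mult.commute)
  qed
  have unif: "\<forall>\<^sub>F n in sequentially. \<forall>x\<in>S. \<forall>h.
      norm ((\<Sum>i<n. inner h (v i x)) - inner h (\<Sum>i. v i x)) \<le> e * norm h" if e: "e > 0" for e
  proof -
    obtain N where N: "\<forall>n\<ge>N. norm (\<Sum>i. M (i + n)) < e"
      using suminf_exist_split[OF e M] by blast
    show ?thesis
    proof (rule eventually_sequentiallyI[of N], intro ballI allI)
      fix n x h assume n: "N \<le> n" and x: "x \<in> S"
      have "(\<Sum>i. M (i + n)) \<le> e" using N n by fastforce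
      then show "norm ((\<Sum>i<n. inner h (v i x)) - inner h (\<Sum>i. v i x)) \<le> e * norm h"
        using order_trans[OF tail[OF x] mult_right_mono[OF _ norm_ge_zero]] by blast
    qed
  qed
  obtain g where g: "\<forall>x\<in>S. (\<lambda>n. f n x) sums g x
      \<and> (g has_derivative (\<lambda>h. inner h (\<Sum>i. v i x))) (at x within S)"
    using has_derivative_series[OF S(1) has_derivative_at_withinI[OF f'] unif S(3) summable_sums[OF f0]]
    by blast
  then have "(g has_derivative (\<lambda>h. inner h (\<Sum>i. v i x0))) (at x0 within S)"
    using S(3) by blast
  then have "(g has_derivative (\<lambda>h. inner h (\<Sum>i. v i x0))) (at x0)"
    by (simp add: at_within_open[OF S(3,2)])
  moreover have "\<And>x. x \<in> S \<Longrightarrow> g x = (\<Sum>n. f n x)"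
    using g by (metis sums_unique)
  ultimately show ?thesis
    by (rule has_derivative_transform_within_open[OF _ S(2,3)])
qed

text \<open>The objective of the max-min problem, with grad_theta V(theta; z) written as (adjoint J z)
  for the Jacobian J of the occupancy measure and l0 the occupancy measure at theta.\<close>

definition saddle_objective :: "(real ^ 'n \<Rightarrow> real) \<Rightarrow> real ^ 'n \<Rightarrow> ('d::euclidean_space \<Rightarrow> real ^ 'n)
    \<Rightarrow> real \<Rightarrow> 'd \<Rightarrow> real ^ 'n \<Rightarrow> ereal" where
  "saddle_objective F l0 J \<delta> x z =
     ereal (inner z l0 + \<delta> * inner (adjoint J z) x - \<delta> / 2 * (norm x)\<^sup>2) - fenchel_dual F z"

lemma norm_diff_le_of_sq_norm_diff_le:
  fixes x g w :: "'a::real_inner"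
  assumes "(norm x)\<^sup>2 - (norm g)\<^sup>2 \<le> 2 * inner w (x - g)"
  shows "norm (x - g) \<le> 2 * norm (w - g)"
proof -
  have "(norm x)\<^sup>2 = (norm (x - g))\<^sup>2 + 2 * inner g (x - g) + (norm g)\<^sup>2"
    unfolding power2_norm_eq_inner by (simp add: inner_diff_left inner_diff_right inner_commute)
  with assms have "(norm (x - g))\<^sup>2 \<le> 2 * inner (w - g) (x - g)"
    by (simp add: inner_diff_left)
  also have "\<dots> \<le> 2 * (norm (w - g) * norm (x - g))"
    using Cauchy_Schwarz_ineq2[of "w - g" "x - g"] by simp
  finally show ?thesis
    by (cases "x = g") (simp_all add: power2_eq_square)
qed

lemma saddle_maximizer_near_gradient:
  fixes F :: "real ^ 'n \<Rightarrow> real" and J :: "'d::euclidean_space \<Rightarrow> real ^ 'n"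
    and l0 :: "real ^ 'n" and \<delta> :: real
  defines "g0 \<equiv> adjoint J (grad F l0)"
  defines "\<nu> \<equiv> l0 + \<delta> *\<^sub>R J g0"
  assumes conc: "concave_on UNIV F" and diff: "\<forall>l. F differentiable (at l)"
    and J: "linear J" and \<delta>: "0 < \<delta>" and Z: "grad F \<nu> \<in> Z"
    and xs_max: "(INF z\<in>Z. saddle_objective F l0 J \<delta> g0 z) \<le> (INF z\<in>Z. saddle_objective F l0 J \<delta> x z)"
  shows "norm (x - g0) \<le> 2 * norm (adjoint J (grad F \<nu> - grad F l0))"
proof -
  define z\<nu> where "z\<nu> = grad F \<nu>"
  have lin: "inner z l0 + \<delta> * inner (adjoint J z) g0 = inner \<nu> z" for z
    unfolding \<nu>_def using J by (simp add: inner_add_left adjoint_clauses(2) inner_commute[of z])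
  have "ereal (F \<nu> - \<delta> / 2 * (norm g0)\<^sup>2) \<le> (INF z\<in>Z. saddle_objective F l0 J \<delta> g0 z)"
  proof (rule INF_greatest)
    fix z
    have "ereal (inner \<nu> z - \<delta> / 2 * (norm g0)\<^sup>2) - ereal (inner \<nu> z - F \<nu>)
        \<le> ereal (inner \<nu> z - \<delta> / 2 * (norm g0)\<^sup>2) - fenchel_dual F z"
      by (rule ereal_minus_mono[OF order_refl fenchel_dual_le])
    then show "ereal (F \<nu> - \<delta> / 2 * (norm g0)\<^sup>2) \<le> saddle_objective F l0 J \<delta> g0 z"
      unfolding saddle_objective_def by (simp add: lin)
  qed
  also note xs_max
  also have "(INF z\<in>Z. saddle_objective F l0 J \<delta> x z) \<le> saddle_objective F l0 J \<delta> x z\<nu>"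
    using Z unfolding z\<nu>_def by (rule INF_lower)
  also have "\<dots> = ereal (inner z\<nu> l0 + \<delta> * inner (adjoint J z\<nu>) x - \<delta> / 2 * (norm x)\<^sup>2
                       - (inner \<nu> z\<nu> - F \<nu>))"
    unfolding saddle_objective_def z\<nu>_def
    using fenchel_dual_grad[OF conc GDERIV_grad] diff by simp
  finally have "\<delta> * ((norm x)\<^sup>2 - (norm g0)\<^sup>2) \<le> \<delta> * (2 * inner (adjoint J z\<nu>) (x - g0))"
    using lin[of z\<nu>] by (simp add: inner_diff_right algebra_simps)
  then have "(norm x)\<^sup>2 - (norm g0)\<^sup>2 \<le> 2 * inner (adjoint J z\<nu>) (x - g0)"
    using \<delta> by simp
  then have "norm (x - g0) \<le> 2 * norm (adjoint J z\<nu> - g0)"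
    by (rule norm_diff_le_of_sq_norm_diff_le)
  then show ?thesis
    unfolding g0_def z\<nu>_def using linear_diff[OF adjoint_linear[OF J]] by metis
qed

lemma saddle_maximizer_bigo:
  fixes F :: "real ^ 'n \<Rightarrow> real" and J :: "'d::euclidean_space \<Rightarrow> real ^ 'n"
    and xs :: "real \<Rightarrow> 'd"
  assumes conc: "concave_on UNIV F" and diff: "\<forall>l. F differentiable (at l)"
    and grad_bound: "\<forall>l. norm1 l \<le> r \<longrightarrow> infnorm (grad F l) \<le> lF"
    and smooth: "\<forall>l l'. infnorm (grad F l - grad F l') \<le> LF * norm1 (l - l')"
    and l0: "norm1 l0 < r" and J: "linear J"
    and xs_max: "\<forall>\<delta>. 0 < \<delta> \<and> \<delta> < 1 \<longrightarrow> (\<forall>x.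
          (INF z\<in>{z. infnorm z \<le> lF}. saddle_objective F l0 J \<delta> x z)
        \<le> (INF z\<in>{z. infnorm z \<le> lF}. saddle_objective F l0 J \<delta> (xs \<delta>) z))"
  shows "(\<lambda>\<delta>. (norm (xs \<delta> - adjoint J (grad F l0)))\<^sup>2) \<in> O[at_right 0](\<lambda>\<delta>. \<delta>\<^sup>2)"
proof -
  define g0 where "g0 = adjoint J (grad F l0)"
  define N where "N = norm1 (J g0)"
  have adj: "bounded_linear (adjoint J)"
    using adjoint_linear[OF J] by (simp add: linear_conv_bounded_linear)
  define B where "B = onorm (adjoint J)"
  have B: "0 \<le> B" "\<And>w. norm (adjoint J w) \<le> B * norm w"
    unfolding B_def using onorm_pos_le[OF adj] onorm[OF adj] by auto
  define c where "c = 2 * B * sqrt CARD('n) * LF * N"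
  define \<delta>0 where "\<delta>0 = min 1 ((r - norm1 l0) / (N + 1))"
  have N: "0 \<le> N" unfolding N_def by (rule norm1_nonneg)
  have \<delta>0: "0 < \<delta>0" unfolding \<delta>0_def using l0 N by simp
  have "norm (xs \<delta> - g0) \<le> c * \<delta>" if \<delta>: "0 < \<delta>" "\<delta> < \<delta>0" for \<delta>
  proof -
    define \<nu> where "\<nu> = l0 + \<delta> *\<^sub>R J g0"
    have \<nu>_dist: "norm1 (\<nu> - l0) = \<delta> * N"
      unfolding \<nu>_def N_def using \<delta> by (simp add: norm1_scaleR)
    have "\<delta> < (r - norm1 l0) / (N + 1)" using \<delta> unfolding \<delta>0_def by simp
    then have "\<delta> * (N + 1) < r - norm1 l0" using N by (simp add: pos_less_divide_eq)
    then have "norm1 \<nu> \<le> r"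
      using norm1_triangle[of l0 "\<nu> - l0"] \<nu>_dist \<delta> by (simp add: algebra_simps)
    then have Z: "grad F \<nu> \<in> {z. infnorm z \<le> lF}" using grad_bound by simp
    have "\<delta> < 1" using \<delta> unfolding \<delta>0_def by simp
    then have "(INF z\<in>{z. infnorm z \<le> lF}. saddle_objective F l0 J \<delta> g0 z)
        \<le> (INF z\<in>{z. infnorm z \<le> lF}. saddle_objective F l0 J \<delta> (xs \<delta>) z)"
      by (rule xs_max[rule_format, OF conjI[OF \<delta>(1)]])
    then have "norm (xs \<delta> - g0) \<le> 2 * norm (adjoint J (grad F \<nu> - grad F l0))"
      unfolding g0_def \<nu>_def
      by (rule saddle_maximizer_near_gradient[OF conc diff J \<delta>(1) Z[unfolded \<nu>_def g0_def]])
    also have "\<dots> \<le> 2 * (B * norm (grad F \<nu> - grad F l0))" using B by simp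
    also have "\<dots> \<le> 2 * (B * (sqrt CARD('n) * infnorm (grad F \<nu> - grad F l0)))"
      using norm_le_infnorm[of "grad F \<nu> - grad F l0"] B by (simp add: mult_left_mono)
    also have "\<dots> \<le> 2 * (B * (sqrt CARD('n) * (LF * (\<delta> * N))))"
    proof -
      have "infnorm (grad F \<nu> - grad F l0) \<le> LF * (\<delta> * N)"
        using smooth \<nu>_dist by metis
      then show ?thesis using B by (simp add: mult_left_mono mult_right_mono)
    qed
    finally show ?thesis unfolding c_def by (simp add: algebra_simps)
  qed
  then have "norm ((norm (xs \<delta> - g0))\<^sup>2) \<le> c\<^sup>2 * norm (\<delta>\<^sup>2)" if "\<delta> \<in> {0<..<\<delta>0}" for \<delta>
    using that power_mono[of "norm (xs \<delta> - g0)" "c * \<delta>" 2] by (simp add: power_mult_distrib)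
  then have "\<forall>\<^sub>F \<delta> in at_right 0. norm ((norm (xs \<delta> - g0))\<^sup>2) \<le> c\<^sup>2 * norm (\<delta>\<^sup>2)"
    by (rule eventually_at_rightI[OF _ \<delta>0])
  then show ?thesis unfolding g0_def by (rule bigoI)
qed

definition is_distribution :: "('a::finite \<Rightarrow> real) \<Rightarrow> bool" where
  "is_distribution p \<longleftrightarrow> (\<forall>x. 0 \<le> p x) \<and> (\<Sum>x\<in>UNIV. p x) = 1"

lemma state_dist_nonneg:
  assumes "is_distribution xi" "\<forall>s a. is_distribution (P s a)" "\<forall>s. is_distribution (pol s)"
  shows "0 \<le> state_dist xi P pol t s"
  using assms by (induction t arbitrary: s) (auto simp: is_distribution_def intro!: sum_nonneg)

lemma sum_state_dist:
  assumes "is_distribution xi" "\<forall>s a. is_distribution (P s a)" "\<forall>s. is_distribution (pol s)"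
  shows "(\<Sum>s\<in>UNIV. state_dist xi P pol t s) = 1"
proof (induction t)
  case 0
  then show ?case using assms(1) by (simp add: is_distribution_def)
next
  case (Suc t)
  have "(\<Sum>s'\<in>UNIV. state_dist xi P pol (Suc t) s')
      = (\<Sum>s\<in>UNIV. \<Sum>s'\<in>UNIV. \<Sum>a\<in>UNIV. state_dist xi P pol t s * pol s a * P s a s')"
    unfolding state_dist.simps by (rule sum.swap)
  also have "\<dots> = (\<Sum>s\<in>UNIV. \<Sum>a\<in>UNIV. state_dist xi P pol t s * pol s a * (\<Sum>s'\<in>UNIV. P s a s'))"
    unfolding sum_distrib_left by (intro sum.cong refl sum.swap)
  also have "\<dots> = (\<Sum>s\<in>UNIV. state_dist xi P pol t s * (\<Sum>a\<in>UNIV. pol s a))"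
    using assms(2) by (simp add: is_distribution_def sum_distrib_left)
  also have "\<dots> = 1"
    using assms(3) Suc by (simp add: is_distribution_def)
  finally show ?case .
qed

lemma state_dist_le_1:
  assumes "is_distribution xi" "\<forall>s a. is_distribution (P s a)" "\<forall>s. is_distribution (pol s)"
  shows "state_dist xi P pol t s \<le> 1"
proof -
  have "state_dist xi P pol t s \<le> (\<Sum>s\<in>UNIV. state_dist xi P pol t s)"
    using state_dist_nonneg[OF assms] by (intro member_le_sum) auto
  then show ?thesis using sum_state_dist[OF assms] by simp
qed

lemma summable_discounted_state_dist:
  assumes "is_distribution xi" "\<forall>s a. is_distribution (P s a)" "\<forall>s. is_distribution (pol s)"
    and "0 \<le> \<gamma>" "\<gamma> < 1"
  shows "summable (\<lambda>t. \<gamma> ^ t * state_dist xi P pol t s)"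
proof (rule summable_comparison_test[OF _ summable_geometric[of \<gamma>]])
  show "\<exists>N. \<forall>t\<ge>N. norm (\<gamma> ^ t * state_dist xi P pol t s) \<le> \<gamma> ^ t"
    using state_dist_nonneg[OF assms(1-3)] state_dist_le_1[OF assms(1-3)] assms(4)
    by (auto intro!: mult_left_le)
qed (use assms(4,5) in auto)

definition discounted_state_dist :: "('s::finite \<Rightarrow> real) \<Rightarrow> ('s \<Rightarrow> 'a::finite \<Rightarrow> 's \<Rightarrow> real)
    \<Rightarrow> real \<Rightarrow> ('s \<Rightarrow> 'a \<Rightarrow> real) \<Rightarrow> 's \<Rightarrow> real" where
  "discounted_state_dist xi P \<gamma> pol s = (\<Sum>t. \<gamma> ^ t * state_dist xi P pol t s)"

lemma occ_component:
  assumes "is_distribution xi" "\<forall>s a. is_distribution (P s a)" "\<forall>s. is_distribution (pol s)"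
    and "0 \<le> \<gamma>" "\<gamma> < 1"
  shows "occ xi P \<gamma> pol $ (s, a) = pol s a * discounted_state_dist xi P \<gamma> pol s"
  unfolding occ_def discounted_state_dist_def
  using suminf_mult2[OF summable_discounted_state_dist[OF assms], where c = "pol s a"]
  by (simp add: mult.commute)

lemma norm1_occ:
  assumes "is_distribution xi" "\<forall>s a. is_distribution (P s a)" "\<forall>s. is_distribution (pol s)"
    and "0 \<le> \<gamma>" "\<gamma> < 1"
  shows "norm1 (occ xi P \<gamma> pol) = 1 / (1 - \<gamma>)"
proof -
  let ?d = "discounted_state_dist xi P \<gamma> pol"
  have d_nonneg: "0 \<le> ?d s" for s
    unfolding discounted_state_dist_def
    using state_dist_nonneg[OF assms(1-3)] assms(4)
    by (intro suminf_nonneg summable_discounted_state_dist[OF assms]) auto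
  have pol_nonneg: "0 \<le> pol s a" for s a
    using assms(3) by (simp add: is_distribution_def)
  have "norm1 (occ xi P \<gamma> pol) = (\<Sum>(s, a)\<in>UNIV. pol s a * ?d s)"
    unfolding norm1_def using d_nonneg pol_nonneg
    by (intro sum.cong) (auto simp: occ_component[OF assms] abs_mult)
  also have "\<dots> = (\<Sum>s\<in>UNIV. \<Sum>a\<in>UNIV. pol s a * ?d s)"
    by (simp add: sum.cartesian_product UNIV_Times_UNIV[symmetric] del: UNIV_Times_UNIV)
  also have "\<dots> = (\<Sum>s\<in>UNIV. (\<Sum>a\<in>UNIV. pol s a) * ?d s)"
    by (simp add: sum_distrib_right)
  also have "\<dots> = (\<Sum>t. \<Sum>s\<in>UNIV. \<gamma> ^ t * state_dist xi P pol t s)"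
    using assms(3) unfolding discounted_state_dist_def is_distribution_def
    by (simp add: suminf_sum summable_discounted_state_dist[OF assms])
  also have "\<dots> = (\<Sum>t. \<gamma> ^ t)"
    by (simp add: sum_distrib_left[symmetric] sum_state_dist[OF assms(1-3)])
  also have "\<dots> = 1 / (1 - \<gamma>)"
    using suminf_geometric[of \<gamma>] assms(4,5) by simp
  finally show ?thesis .
qed

fun state_dist_grad :: "('s::finite \<Rightarrow> real) \<Rightarrow> ('s \<Rightarrow> 'a::finite \<Rightarrow> 's \<Rightarrow> real)
    \<Rightarrow> ('s \<Rightarrow> 'a \<Rightarrow> real) \<Rightarrow> ('s \<Rightarrow> 'a \<Rightarrow> 'v::real_vector) \<Rightarrow> nat \<Rightarrow> 's \<Rightarrow> 'v" where
  "state_dist_grad xi P pol dpol 0 s = 0"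
| "state_dist_grad xi P pol dpol (Suc t) s' =
     (\<Sum>s\<in>UNIV. \<Sum>a\<in>UNIV. (pol s a * P s a s') *\<^sub>R state_dist_grad xi P pol dpol t s
        + (state_dist xi P pol t s * P s a s') *\<^sub>R dpol s a)"

lemma has_derivative_state_dist:
  fixes pi :: "'v::real_inner \<Rightarrow> 's::finite \<Rightarrow> 'a::finite \<Rightarrow> real"
  assumes "\<And>s a. ((\<lambda>\<eta>. pi \<eta> s a) has_derivative (\<lambda>h. inner h (dpol s a))) (at \<theta>)"
  shows "((\<lambda>\<eta>. state_dist xi P (pi \<eta>) t s) has_derivative
            (\<lambda>h. inner h (state_dist_grad xi P (pi \<theta>) dpol t s))) (at \<theta>)"
proof (induction t arbitrary: s)
  case 0
  then show ?case by simp
next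
  case (Suc t)
  have "((\<lambda>\<eta>. \<Sum>u\<in>UNIV. \<Sum>a\<in>UNIV. state_dist xi P (pi \<eta>) t u * pi \<eta> u a * P u a s) has_derivative
     (\<lambda>h. \<Sum>u\<in>UNIV. \<Sum>a\<in>UNIV. (state_dist xi P (pi \<theta>) t u * inner h (dpol u a)
          + inner h (state_dist_grad xi P (pi \<theta>) dpol t u) * pi \<theta> u a) * P u a s)) (at \<theta>)"
    by (intro has_derivative_sum has_derivative_mult_left has_derivative_mult Suc assms)
  then show ?case
    by (simp add: inner_sum_right inner_add_right algebra_simps)
qed

lemma sum_norm_state_dist_grad_le:
  assumes "is_distribution xi" "\<forall>s a. is_distribution (P s a)" "\<forall>s. is_distribution (pol s)"
    and K: "\<And>s. (\<Sum>a\<in>UNIV. norm (dpol s a)) \<le> K"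
  shows "(\<Sum>s\<in>UNIV. norm (state_dist_grad xi P pol dpol t s)) \<le> real t * K"
proof (induction t)
  case 0
  then show ?case by simp
next
  case (Suc t)
  let ?d = "state_dist xi P pol t" and ?G = "state_dist_grad xi P pol dpol t"
  have nonneg: "0 \<le> ?d s" "0 \<le> pol s a" "0 \<le> P s a s'" for s a s'
    using state_dist_nonneg[OF assms(1-3)] assms(2,3) by (auto simp: is_distribution_def)
  have "(\<Sum>s'\<in>UNIV. norm (state_dist_grad xi P pol dpol (Suc t) s'))
     \<le> (\<Sum>s'\<in>UNIV. \<Sum>s\<in>UNIV. \<Sum>a\<in>UNIV.
           (pol s a * P s a s') * norm (?G s) + (?d s * P s a s') * norm (dpol s a))"
    unfolding state_dist_grad.simps
    by (intro sum_mono sum_norm_le norm_triangle_le) (simp add: nonneg)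
  also have "\<dots> = (\<Sum>s\<in>UNIV. \<Sum>a\<in>UNIV.
           (pol s a * norm (?G s) + ?d s * norm (dpol s a)) * (\<Sum>s'\<in>UNIV. P s a s'))"
    unfolding sum_distrib_left
    by (subst sum.swap, intro sum.cong refl, subst sum.swap) (simp add: algebra_simps)
  also have "\<dots> = (\<Sum>s\<in>UNIV. (\<Sum>a\<in>UNIV. pol s a) * norm (?G s) + ?d s * (\<Sum>a\<in>UNIV. norm (dpol s a)))"
    using assms(2) by (simp add: is_distribution_def sum.distrib sum_distrib_left sum_distrib_right)
  also have "\<dots> \<le> (\<Sum>s\<in>UNIV. norm (?G s) + ?d s * K)"
    using assms(3) K nonneg by (intro sum_mono) (simp add: is_distribution_def mult_left_mono)
  also have "\<dots> = (\<Sum>s\<in>UNIV. norm (?G s)) + K"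
    using sum_state_dist[OF assms(1-3)] by (simp add: sum.distrib sum_distrib_right[symmetric])
  also have "\<dots> \<le> real (Suc t) * K"
    using Suc by (simp add: algebra_simps)
  finally show ?case .
qed

lemma differentiable_discounted_state_dist:
  fixes pi :: "'v::euclidean_space \<Rightarrow> 's::finite \<Rightarrow> 'a::finite \<Rightarrow> real"
  assumes S: "convex S" "open S" "\<theta> \<in> S"
    and xi: "is_distribution xi" and P: "\<forall>s a. is_distribution (P s a)"
    and pol: "\<forall>\<eta>\<in>S. \<forall>s. is_distribution (pi \<eta> s)"
    and diff: "\<forall>\<eta>\<in>S. \<forall>s a. (\<lambda>x. pi x s a) differentiable (at \<eta>)"
    and bound: "\<forall>\<eta>\<in>S. \<forall>s a. norm (grad (\<lambda>x. pi x s a) \<eta>) \<le> C"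
    and \<gamma>: "0 \<le> \<gamma>" "\<gamma> < 1"
  shows "(\<lambda>\<eta>. discounted_state_dist xi P \<gamma> (pi \<eta>) s) differentiable (at \<theta>)"
proof -
  define dpol where "dpol \<eta> s a = grad (\<lambda>x. pi x s a) \<eta>" for \<eta> s a
  define v where "v t \<eta> = \<gamma> ^ t *\<^sub>R state_dist_grad xi P (pi \<eta>) (dpol \<eta>) t s" for t \<eta>
  define K where "K = real CARD('a) * C"
  have "((\<lambda>\<eta>. \<Sum>t. \<gamma> ^ t * state_dist xi P (pi \<eta>) t s) has_derivative
      (\<lambda>h. inner h (\<Sum>t. v t \<theta>))) (at \<theta>)"
  proof (rule has_derivative_suminf[OF S])
    fix t \<eta> assume "\<eta> \<in> S"
    then have "((\<lambda>x. state_dist xi P (pi x) t s) has_derivative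
        (\<lambda>h. inner h (state_dist_grad xi P (pi \<eta>) (dpol \<eta>) t s))) (at \<eta>)"
      using diff GDERIV_grad unfolding dpol_def gderiv_def
      by (intro has_derivative_state_dist) blast
    then show "((\<lambda>x. \<gamma> ^ t * state_dist xi P (pi x) t s) has_derivative (\<lambda>h. inner h (v t \<eta>))) (at \<eta>)"
      unfolding v_def by (simp add: has_derivative_mult_right)
  next
    fix t \<eta> assume \<eta>: "\<eta> \<in> S"
    have "norm (state_dist_grad xi P (pi \<eta>) (dpol \<eta>) t s)
        \<le> (\<Sum>s\<in>UNIV. norm (state_dist_grad xi P (pi \<eta>) (dpol \<eta>) t s))"
      by (rule member_le_sum) auto
    also have "\<dots> \<le> real t * K"
      using xi P pol bound \<eta> unfolding K_def dpol_def
      by (intro sum_norm_state_dist_grad_le sum_bounded_above[where A = UNIV, simplified]) auto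
    finally have "\<gamma> ^ t * norm (state_dist_grad xi P (pi \<eta>) (dpol \<eta>) t s) \<le> \<gamma> ^ t * (real t * K)"
      using \<gamma> by (intro mult_left_mono) auto
    then show "norm (v t \<eta>) \<le> real t * \<gamma> ^ t * K"
      unfolding v_def using \<gamma> by (simp add: algebra_simps)
  next
    show "summable (\<lambda>t. real t * \<gamma> ^ t * K)"
      using \<gamma> by (intro summable_mult2 summable_of_nat_mult_power)
  next
    show "summable (\<lambda>t. \<gamma> ^ t * state_dist xi P (pi \<theta>) t s)"
      using xi P pol S(3) \<gamma> by (intro summable_discounted_state_dist) auto
  qed
  then show ?thesis
    unfolding discounted_state_dist_def differentiable_def by blast
qed

lemma norm_le_of_sum_scaleR_bound:
  fixes g :: "'a::finite \<Rightarrow> 'v::real_normed_vector"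
  assumes "\<forall>u. (\<forall>a. \<bar>u a\<bar> \<le> 1) \<longrightarrow> norm (\<Sum>a\<in>UNIV. u a *\<^sub>R g a) \<le> C"
  shows "norm (g a) \<le> C"
proof -
  have "norm (\<Sum>b\<in>UNIV. (if b = a then 1 else 0) *\<^sub>R g b) \<le> C"
    using assms by simp
  then show ?thesis
    by (simp add: if_distrib[of "\<lambda>c. c *\<^sub>R _"] cong: if_cong)
qed

lemma occ_differentiable:
  fixes pi :: "'v::euclidean_space \<Rightarrow> 's::finite \<Rightarrow> 'a::finite \<Rightarrow> real"
  assumes \<Theta>: "open \<Theta>" "\<theta> \<in> \<Theta>"
    and xi: "is_distribution xi" and P: "\<forall>s a. is_distribution (P s a)"
    and pol: "\<forall>\<eta>\<in>\<Theta>. \<forall>s. is_distribution (pi \<eta> s)"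
    and diff: "\<forall>\<eta>\<in>\<Theta>. \<forall>s a. (\<lambda>x. pi x s a) differentiable (at \<eta>)"
    and bound: "\<forall>\<eta>\<in>\<Theta>. \<forall>s a. norm (grad (\<lambda>x. pi x s a) \<eta>) \<le> C"
    and \<gamma>: "0 \<le> \<gamma>" "\<gamma> < 1"
  shows "(\<lambda>\<eta>. occ xi P \<gamma> (pi \<eta>)) differentiable (at \<theta>)"
proof -
  obtain r where r: "0 < r" "ball \<theta> r \<subseteq> \<Theta>"
    using \<Theta> open_contains_ball by blast
  have ball: "convex (ball \<theta> r)" "open (ball \<theta> r)" "\<theta> \<in> ball \<theta> r"
    using r(1) by auto
  have "(\<lambda>\<eta>. occ xi P \<gamma> (pi \<eta>) $ (s, a)) differentiable (at \<theta>)" for s a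
  proof (rule differentiable_transform_within[OF _ r(1) UNIV_I])
    have "\<forall>\<eta>\<in>ball \<theta> r. \<forall>s. is_distribution (pi \<eta> s)"
      and "\<forall>\<eta>\<in>ball \<theta> r. \<forall>s a. (\<lambda>x. pi x s a) differentiable (at \<eta>)"
      and "\<forall>\<eta>\<in>ball \<theta> r. \<forall>s a. norm (grad (\<lambda>x. pi x s a) \<eta>) \<le> C"
      using r(2) pol diff bound by (simp_all add: subset_iff)
    then have "(\<lambda>\<eta>. discounted_state_dist xi P \<gamma> (pi \<eta>) s) differentiable (at \<theta>)"
      by (intro differentiable_discounted_state_dist[OF ball xi P _ _ _ \<gamma>])
    moreover have "(\<lambda>\<eta>. pi \<eta> s a) differentiable (at \<theta>)"
      using diff \<Theta>(2) by blast
    ultimately show "(\<lambda>\<eta>. pi \<eta> s a * discounted_state_dist xi P \<gamma> (pi \<eta>) s) differentiable (at \<theta>)"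
      by (intro differentiable_mult)
    fix \<eta> assume "\<eta> \<in> UNIV" "dist \<eta> \<theta> < r"
    then have "\<eta> \<in> \<Theta>" using r(2) by (auto simp: dist_commute)
    then show "pi \<eta> s a * discounted_state_dist xi P \<gamma> (pi \<eta>) s = occ xi P \<gamma> (pi \<eta>) $ (s, a)"
      using occ_component[OF xi P _ \<gamma>] pol by simp
  qed
  then show ?thesis
    by (intro differentiable_componentwise_within[THEN iffD2]) (auto simp: Basis_vec_def inner_axis)
qed

theorem mainTheorem3:
  fixes xi :: "'s::finite \<Rightarrow> real"
    and P :: "'s \<Rightarrow> 'a::finite \<Rightarrow> 's \<Rightarrow> real"
    and \<gamma> :: real
    and \<pi> :: "real ^ 'd::finite \<Rightarrow> 's \<Rightarrow> 'a \<Rightarrow> real"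
    and \<Theta> :: "(real ^ 'd) set"
    and \<theta> :: "real ^ 'd"
    and F :: "real ^ ('s \<times> 'a) \<Rightarrow> real"
    and lF LF lFs C :: real
    and xs :: "real \<Rightarrow> real ^ 'd"
  assumes xi_dist: "\<forall>s. xi s \<ge> 0" "(\<Sum>s\<in>UNIV. xi s) = 1"
    and P_dist: "\<forall>s a s'. P s a s' \<ge> 0" "\<forall>s a. (\<Sum>s'\<in>UNIV. P s a s') = 1"
    and gamma: "0 < \<gamma>" "\<gamma> < 1"
    and Theta: "open \<Theta>" "\<theta> \<in> \<Theta>"
    and pi_dist: "\<forall>th\<in>\<Theta>. \<forall>s a. \<pi> th s a \<ge> 0"
                 "\<forall>th\<in>\<Theta>. \<forall>s. (\<Sum>a\<in>UNIV. \<pi> th s a) = 1"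
    \<comment> \<open>(i)\<close>
    and F_concave: "concave_on UNIV F"
    and F_diff: "\<forall>l. F differentiable (at l)"
    and F_grad_bound: "\<forall>l. norm1 l \<le> 2 / (1 - \<gamma>) \<longrightarrow> infnorm (grad F l) \<le> lF"
    \<comment> \<open>(ii)\<close>
    and F_smooth: "\<forall>l l'. infnorm (grad F l - grad F l') \<le> LF * norm1 (l - l')"
    \<comment> \<open>(iii)\<close>
    and Fstar_lip: "\<forall>z\<in>{z. infnorm z \<le> 2 * lF \<and> fenchel_dual F z > -\<infinity>}.
                    \<forall>z'\<in>{z. infnorm z \<le> 2 * lF \<and> fenchel_dual F z > -\<infinity>}.
                      \<bar>real_of_ereal (fenchel_dual F z) - real_of_ereal (fenchel_dual F z')\<bar>
                        \<le> lFs * infnorm (z - z')"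
    \<comment> \<open>(iv)\<close>
    and pi_diff: "\<forall>th\<in>\<Theta>. \<forall>s a. (\<lambda>\<eta>. \<pi> \<eta> s a) differentiable (at th)"
    and pi_grad_bound: "\<forall>th\<in>\<Theta>. \<forall>s. \<forall>u :: 'a \<Rightarrow> real. (\<forall>a. \<bar>u a\<bar> \<le> 1) \<longrightarrow>
                          norm (\<Sum>a\<in>UNIV. u a *\<^sub>R grad (\<lambda>\<eta>. \<pi> \<eta> s a) th) \<le> C"
    \<comment> \<open>x*(\<delta>) maximizes x \<mapsto> min over the infinity-ball of radius lF of the objective\<close>
    and xs_argmax: "\<forall>\<delta>. 0 < \<delta> \<and> \<delta> < 1 \<longrightarrow> (\<forall>x.
          (INF z\<in>{z. infnorm z \<le> lF}.
             ereal (inner z (occ xi P \<gamma> (\<pi> \<theta>))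
                    + \<delta> * inner (grad (\<lambda>\<eta>. inner z (occ xi P \<gamma> (\<pi> \<eta>))) \<theta>) x
                    - \<delta> / 2 * (norm x)\<^sup>2) - fenchel_dual F z)
          \<le> (INF z\<in>{z. infnorm z \<le> lF}.
             ereal (inner z (occ xi P \<gamma> (\<pi> \<theta>))
                    + \<delta> * inner (grad (\<lambda>\<eta>. inner z (occ xi P \<gamma> (\<pi> \<eta>))) \<theta>) (xs \<delta>)
                    - \<delta> / 2 * (norm (xs \<delta>))\<^sup>2) - fenchel_dual F z))"
  shows "(\<lambda>\<delta>. (norm (xs \<delta> - grad (\<lambda>\<eta>. F (occ xi P \<gamma> (\<pi> \<eta>))) \<theta>))\<^sup>2)
           \<in> O[at_right 0](\<lambda>\<delta>. \<delta>\<^sup>2)"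
proof -
  have xi: "is_distribution xi" and P: "\<forall>s a. is_distribution (P s a)"
    and pol: "\<forall>\<eta>\<in>\<Theta>. \<forall>s. is_distribution (\<pi> \<eta> s)"
    using xi_dist P_dist pi_dist by (auto simp: is_distribution_def)
  have grad_pi: "\<forall>\<eta>\<in>\<Theta>. \<forall>s a. norm (grad (\<lambda>x. \<pi> x s a) \<eta>) \<le> C"
  proof (intro ballI allI)
    fix \<eta> s a assume "\<eta> \<in> \<Theta>"
    then show "norm (grad (\<lambda>x. \<pi> x s a) \<eta>) \<le> C"
      using pi_grad_bound norm_le_of_sum_scaleR_bound[of "\<lambda>b. grad (\<lambda>x. \<pi> x s b) \<eta>"] by blast
  qed
  obtain J where J: "((\<lambda>\<eta>. occ xi P \<gamma> (\<pi> \<eta>)) has_derivative J) (at \<theta>)"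
    using occ_differentiable[OF Theta xi P pol pi_diff grad_pi less_imp_le[OF gamma(1)] gamma(2)]
    unfolding differentiable_def by blast
  define l0 where "l0 = occ xi P \<gamma> (\<pi> \<theta>)"
  have grad_V: "grad (\<lambda>\<eta>. inner z (occ xi P \<gamma> (\<pi> \<eta>))) \<theta> = adjoint J z" for z
    using J by (rule grad_compose_has_derivative)
      (simp add: gderiv_def inner_commute[of _ z] bounded_linear.has_derivative[OF bounded_linear_inner_right])
  have grad_R: "grad (\<lambda>\<eta>. F (occ xi P \<gamma> (\<pi> \<eta>))) \<theta> = adjoint J (grad F l0)"
    unfolding l0_def using F_diff by (intro grad_compose_has_derivative[OF J] GDERIV_grad) blast
  have "norm1 l0 < 2 / (1 - \<gamma>)"
    unfolding l0_def using norm1_occ[OF xi P] pol Theta(2) gamma by (simp add: divide_strict_right_mono)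
  moreover have "\<forall>\<delta>. 0 < \<delta> \<and> \<delta> < 1 \<longrightarrow> (\<forall>x.
        (INF z\<in>{z. infnorm z \<le> lF}. saddle_objective F l0 J \<delta> x z)
      \<le> (INF z\<in>{z. infnorm z \<le> lF}. saddle_objective F l0 J \<delta> (xs \<delta>) z))"
    using xs_argmax unfolding saddle_objective_def grad_V l0_def .
  ultimately show ?thesis
    unfolding grad_R
    by (rule saddle_maximizer_bigo[OF F_concave F_diff F_grad_bound F_smooth _ has_derivative_linear[OF J]])
qed

end
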